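(* If $G$ and $H$ are isoclinic finite groups with $|G|=|H|$, then $A_G(t)=A_H(t)$ and $B_G(t)=B_H(t)$.
   Context: For a finite group $G$ and $n\ge 0$, $G$ acts on $G^n$ by simultaneous conjugation. Let $G^{(n)}\subseteq G^n$ be the set of $n$-tuples of pairwise commuting elements. Let $\alpha_{G,n}$ (resp. $\beta_{G,n}$) be the number of $G$-orbits on $G^n$ (resp. on $G^{(n)}$), and set $A_G(t)=\sum_{n\ge0}\alpha_{G,n}t^n$, $B_G(t)=\sum_{n\ge0}\beta_{G,n}t^n$. Two finite groups $G$ and $H$ are isoclinic if there exist isomorphisms $\theta:G/Z(G)\to H/Z(H)$ and $\phi:G'\to H'$ (commutator subgroups) such that $\phi([g_1,g_2])=[h_1,h_2]$ whenever $\theta(g_iZ(G))=h_iZ(H)$, $i=1,2$. *)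

theory Defs
  imports "HOL-Algebra.Algebra" "HOL-Library.FuncSet" "HOL-Computational_Algebra.Formal_Power_Series"
begin

definition grp_center :: "('a, 'b) monoid_scheme \<Rightarrow> 'a set" where
  "grp_center G = {z \<in> carrier G. \<forall>g \<in> carrier G. z \<otimes>\<^bsub>G\<^esub> g = g \<otimes>\<^bsub>G\<^esub> z}"

definition grp_comm :: "('a, 'b) monoid_scheme \<Rightarrow> 'a \<Rightarrow> 'a \<Rightarrow> 'a" where
  "grp_comm G x y = inv\<^bsub>G\<^esub> x \<otimes>\<^bsub>G\<^esub> inv\<^bsub>G\<^esub> y \<otimes>\<^bsub>G\<^esub> x \<otimes>\<^bsub>G\<^esub> y"

definition comm_subgrp :: "('a, 'b) monoid_scheme \<Rightarrow> ('a, 'b) monoid_scheme" where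
  "comm_subgrp G = G\<lparr>carrier := derived G (carrier G)\<rparr>"

definition isoclinic :: "('a, 'b) monoid_scheme \<Rightarrow> ('c, 'd) monoid_scheme \<Rightarrow> bool" where
  "isoclinic G H \<longleftrightarrow>
     (\<exists>\<theta> \<phi>. \<theta> \<in> iso (G Mod grp_center G) (H Mod grp_center H) \<and>
            \<phi> \<in> iso (comm_subgrp G) (comm_subgrp H) \<and>
            (\<forall>g1 \<in> carrier G. \<forall>g2 \<in> carrier G. \<forall>h1 \<in> carrier H. \<forall>h2 \<in> carrier H.
               \<theta> (grp_center G #>\<^bsub>G\<^esub> g1) = grp_center H #>\<^bsub>H\<^esub> h1 \<and>
               \<theta> (grp_center G #>\<^bsub>G\<^esub> g2) = grp_center H #>\<^bsub>H\<^esub> h2 \<longrightarrow>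
               \<phi> (grp_comm G g1 g2) = grp_comm H h1 h2))"

definition tuples :: "('a, 'b) monoid_scheme \<Rightarrow> nat \<Rightarrow> (nat \<Rightarrow> 'a) set" where
  "tuples G n = {0..<n} \<rightarrow>\<^sub>E carrier G"

definition comm_tuples :: "('a, 'b) monoid_scheme \<Rightarrow> nat \<Rightarrow> (nat \<Rightarrow> 'a) set" where
  "comm_tuples G n = {x \<in> tuples G n. \<forall>i<n. \<forall>j<n. x i \<otimes>\<^bsub>G\<^esub> x j = x j \<otimes>\<^bsub>G\<^esub> x i}"

definition sim_conj :: "('a, 'b) monoid_scheme \<Rightarrow> nat \<Rightarrow> 'a \<Rightarrow> (nat \<Rightarrow> 'a) \<Rightarrow> (nat \<Rightarrow> 'a)" where
  "sim_conj G n g x = restrict (\<lambda>i. g \<otimes>\<^bsub>G\<^esub> x i \<otimes>\<^bsub>G\<^esub> inv\<^bsub>G\<^esub> g) {0..<n}"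

definition conj_orbit :: "('a, 'b) monoid_scheme \<Rightarrow> nat \<Rightarrow> (nat \<Rightarrow> 'a) \<Rightarrow> (nat \<Rightarrow> 'a) set" where
  "conj_orbit G n x = (\<lambda>g. sim_conj G n g x) ` carrier G"

definition num_orbits :: "('a, 'b) monoid_scheme \<Rightarrow> nat \<Rightarrow> (nat \<Rightarrow> 'a) set \<Rightarrow> nat" where
  "num_orbits G n S = card (image (conj_orbit G n) S)"

definition alpha :: "('a, 'b) monoid_scheme \<Rightarrow> nat \<Rightarrow> nat" where
  "alpha G n = num_orbits G n (tuples G n)"

definition beta :: "('a, 'b) monoid_scheme \<Rightarrow> nat \<Rightarrow> nat" where
  "beta G n = num_orbits G n (comm_tuples G n)"

definition A_series :: "('a, 'b) monoid_scheme \<Rightarrow> int fps" where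
  "A_series G = Abs_fps (\<lambda>n. int (alpha G n))"

definition B_series :: "('a, 'b) monoid_scheme \<Rightarrow> int fps" where
  "B_series G = Abs_fps (\<lambda>n. int (beta G n))"

end

theory Submission
  imports Defs "HOL-Library.Equipollence"
begin

text \<open>
  An isoclinism identifies \<open>G/Z(G)\<close> with \<open>H/Z(H)\<close> and \<open>G'\<close> with \<open>H'\<close> compatibly
  with commutators. If \<open>|G| = |H|\<close>, Lagrange gives \<open>|Z(G)| = |Z(H)|\<close>, so the bijection of
  coset spaces lifts to a bijection \<open>f : G \<rightarrow> H\<close> sending each coset of \<open>Z(G)\<close> into the
  corresponding coset of \<open>Z(H)\<close>. Then \<open>[f a, f b]\<close> is the image of \<open>[a, b]\<close> under the
  isomorphism \<open>G' \<cong> H'\<close>, so \<open>f\<close> preserves and reflects commutation.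
  By Burnside's lemma, \<open>|G|\<close> times the number of orbits on a stable set of \<open>n\<close>-tuples is the
  number of pairs \<open>(g, x)\<close> with \<open>g\<close> commuting with every entry of \<open>x\<close>. Applying \<open>f\<close>
  entrywise matches these pairs for \<open>G\<close> and \<open>H\<close>, both on all tuples and on pairwise
  commuting ones.
\<close>

lemma (in group) grp_comm_eq_one_iff:
  assumes "a \<in> carrier G" "b \<in> carrier G"
  shows "grp_comm G a b = \<one> \<longleftrightarrow> a \<otimes> b = b \<otimes> a"
proof -
  have "grp_comm G a b = inv (b \<otimes> a) \<otimes> (a \<otimes> b)"
    unfolding grp_comm_def using assms by (simp add: inv_mult_group m_assoc)
  also have "\<dots> = \<one> \<longleftrightarrow> a \<otimes> b = b \<otimes> a"
    using assms by (metis inv_equality inv_inv m_closed r_inv inv_closed)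
  finally show ?thesis .
qed

lemma (in group) grp_comm_in_derived:
  assumes "a \<in> carrier G" "b \<in> carrier G"
  shows "grp_comm G a b \<in> derived G (carrier G)"
proof -
  have "grp_comm G a b = inv a \<otimes> inv b \<otimes> inv (inv a) \<otimes> inv (inv b)"
    unfolding grp_comm_def using assms by simp
  also have "\<dots> \<in> derived_set G (carrier G)"
    using assms by blast
  finally show ?thesis
    unfolding derived_def by (rule generate.incl)
qed

lemma commute_iff_by_commutator_iso:
  assumes "group G" "group H" and \<phi>: "\<phi> \<in> iso (comm_subgrp G) (comm_subgrp H)"
    and "a \<in> carrier G" "b \<in> carrier G" "c \<in> carrier H" "d \<in> carrier H"
    and comm: "\<phi> (grp_comm G a b) = grp_comm H c d"
  shows "a \<otimes>\<^bsub>G\<^esub> b = b \<otimes>\<^bsub>G\<^esub> a \<longleftrightarrow> c \<otimes>\<^bsub>H\<^esub> d = d \<otimes>\<^bsub>H\<^esub> c"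
proof -
  interpret G: group G by fact
  interpret H: group H by fact
  have groups: "group (comm_subgrp G)" "group (comm_subgrp H)"
    unfolding comm_subgrp_def
    by (simp_all add: G.derived_is_subgroup H.derived_is_subgroup
        G.subgroup_imp_group H.subgroup_imp_group)
  interpret \<phi>: group_hom "comm_subgrp G" "comm_subgrp H" \<phi>
    using groups \<phi> by (simp add: group_hom_def group_hom_axioms_def iso_def)
  have one: "\<phi> \<one>\<^bsub>G\<^esub> = \<one>\<^bsub>H\<^esub>"
    using \<phi>.hom_one by (simp add: comm_subgrp_def)
  have "inj_on \<phi> (derived G (carrier G))"
    using \<phi> by (simp add: iso_def bij_betw_def comm_subgrp_def)
  moreover have "\<one>\<^bsub>G\<^esub> \<in> derived G (carrier G)"
    using G.derived_is_subgroup subgroup.one_closed by blast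
  ultimately have "grp_comm G a b = \<one>\<^bsub>G\<^esub> \<longleftrightarrow> grp_comm H c d = \<one>\<^bsub>H\<^esub>"
    using G.grp_comm_in_derived assms(4,5) comm one by (metis inj_on_eq_iff)
  then show ?thesis
    using G.grp_comm_eq_one_iff H.grp_comm_eq_one_iff assms(4-7) by simp
qed

lemma (in group) subgroup_grp_center: "subgroup (grp_center G) G"
proof
  show "grp_center G \<subseteq> carrier G"
    by (auto simp: grp_center_def)
  show "\<one> \<in> grp_center G"
    by (auto simp: grp_center_def)
next
  fix x y assume "x \<in> grp_center G" "y \<in> grp_center G"
  then have x: "x \<in> carrier G" "\<And>g. g \<in> carrier G \<Longrightarrow> x \<otimes> g = g \<otimes> x"
    and y: "y \<in> carrier G" "\<And>g. g \<in> carrier G \<Longrightarrow> y \<otimes> g = g \<otimes> y"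
    by (auto simp: grp_center_def)
  have "x \<otimes> y \<otimes> g = g \<otimes> (x \<otimes> y)" if g: "g \<in> carrier G" for g
  proof -
    have "x \<otimes> y \<otimes> g = x \<otimes> (g \<otimes> y)"
      using x(1) y(1) y(2)[OF g] g by (simp add: m_assoc)
    also have "\<dots> = g \<otimes> (x \<otimes> y)"
      using x(1) x(2)[OF g] y(1) g by (simp add: m_assoc[symmetric])
    finally show ?thesis .
  qed
  then show "x \<otimes> y \<in> grp_center G"
    using x(1) y(1) by (auto simp: grp_center_def)
next
  fix x assume "x \<in> grp_center G"
  then have x: "x \<in> carrier G" "\<And>g. g \<in> carrier G \<Longrightarrow> x \<otimes> g = g \<otimes> x"
    by (auto simp: grp_center_def)
  have "inv x \<otimes> g = g \<otimes> inv x" if g: "g \<in> carrier G" for g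
  proof -
    have "inv x \<otimes> g = inv x \<otimes> (g \<otimes> x) \<otimes> inv x"
      using x(1) g by (simp add: m_assoc)
    also have "\<dots> = g \<otimes> inv x"
      using x(1) x(2)[OF g, symmetric] g by (simp add: m_assoc[symmetric])
    finally show ?thesis .
  qed
  then show "inv x \<in> grp_center G"
    using x(1) by (auto simp: grp_center_def)
qed

lemma partition_bij_lift:
  assumes \<theta>: "bij_betw \<theta> P Q"
    and "\<Union>P = A" "\<Union>Q = B" "pairwise disjnt P" "pairwise disjnt Q"
    and eqpoll: "\<And>C. C \<in> P \<Longrightarrow> C \<approx> \<theta> C"
  obtains f where "bij_betw f A B" "\<And>C x. C \<in> P \<Longrightarrow> x \<in> C \<Longrightarrow> f x \<in> \<theta> C"
proof -
  obtain b where b: "\<And>C. C \<in> P \<Longrightarrow> bij_betw (b C) C (\<theta> C)"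
    using eqpoll unfolding eqpoll_def by metis
  define block where "block x = (SOME C. C \<in> P \<and> x \<in> C)" for x
  have block: "block x = C" if "C \<in> P" "x \<in> C" for C x
    using that \<open>pairwise disjnt P\<close> unfolding block_def
    by (rule_tac some_equality) (auto simp: pairwise_def disjnt_def)
  define f where "f x = b (block x) x" for x
  have f: "f x \<in> \<theta> C" if "C \<in> P" "x \<in> C" for C x
    using that b[of C] block by (auto simp: f_def dest: bij_betwE)
  have "inj_on f A"
  proof
    fix x y assume "x \<in> A" "y \<in> A" and eq: "f x = f y"
    then obtain C D where CD: "C \<in> P" "x \<in> C" "D \<in> P" "y \<in> D"
      using \<open>\<Union>P = A\<close> by blast
    have "\<theta> C \<in> Q" "\<theta> D \<in> Q"
      using CD \<theta> by (auto dest: bij_betwE)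
    then have "\<theta> C = \<theta> D"
      using f[OF CD(1,2)] f[OF CD(3,4)] eq \<open>pairwise disjnt Q\<close>
      by (metis disjnt_iff pairwiseD)
    then have "C = D"
      using \<theta> CD by (metis bij_betw_imp_inj_on inj_on_eq_iff)
    moreover have "b C x = b C y"
      using eq CD block \<open>C = D\<close> by (simp add: f_def)
    ultimately show "x = y"
      using b[OF CD(1)] CD by (auto simp: bij_betw_def dest: inj_onD)
  qed
  moreover have "f ` A = B"
  proof
    show "f ` A \<subseteq> B"
    proof
      fix y assume "y \<in> f ` A"
      then obtain C x where "C \<in> P" "x \<in> C" "y = f x"
        using \<open>\<Union>P = A\<close> by blast
      then show "y \<in> B"
        using f \<theta> \<open>\<Union>Q = B\<close> by (blast dest: bij_betwE)
    qed
  next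
    show "B \<subseteq> f ` A"
    proof
      fix y assume "y \<in> B"
      then obtain C where C: "C \<in> P" "y \<in> \<theta> C"
        using \<theta> \<open>\<Union>Q = B\<close> by (metis UnionE bij_betw_def imageE)
      then obtain x where "x \<in> C" "y = b C x"
        using b[OF C(1)] by (metis bij_betw_def imageE)
      then show "y \<in> f ` A"
        using C block \<open>\<Union>P = A\<close> by (auto simp: f_def)
    qed
  qed
  ultimately show ?thesis
    using f that by (auto simp: bij_betw_def)
qed

lemma lift_rcosets_bij:
  assumes "group G" "group H" "subgroup N G" "subgroup M H"
    and "finite (carrier G)" "order G = order H"
    and \<theta>: "bij_betw \<theta> (rcosets\<^bsub>G\<^esub> N) (rcosets\<^bsub>H\<^esub> M)"
  obtains f where "bij_betw f (carrier G) (carrier H)"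
    and "\<And>g. g \<in> carrier G \<Longrightarrow> \<theta> (N #>\<^bsub>G\<^esub> g) = M #>\<^bsub>H\<^esub> f g"
proof -
  interpret G: group G by fact
  interpret H: group H by fact
  have "order G > 0"
    using \<open>finite (carrier G)\<close> G.order_gt_0_iff_finite by blast
  then have "finite (carrier H)"
    using \<open>order G = order H\<close> H.order_gt_0_iff_finite by simp
  have "card (rcosets\<^bsub>G\<^esub> N) * card N = card (rcosets\<^bsub>H\<^esub> M) * card M"
    using G.lagrange H.lagrange assms(3,4,6) by simp
  moreover have "card (rcosets\<^bsub>G\<^esub> N) = card (rcosets\<^bsub>H\<^esub> M)"
    using \<theta> by (rule bij_betw_same_card)
  moreover have "card (rcosets\<^bsub>G\<^esub> N) > 0"
    using G.lagrange[OF assms(3)] \<open>order G > 0\<close> by (metis gr0I mult_0)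
  ultimately have card_eq: "card N = card M"
    by simp
  have "C \<approx> \<theta> C" if C: "C \<in> rcosets\<^bsub>G\<^esub> N" for C
  proof -
    have \<theta>C: "\<theta> C \<in> rcosets\<^bsub>H\<^esub> M"
      using \<theta> C by (rule bij_betw_apply)
    have "finite C" "finite (\<theta> C)"
      using C \<theta>C G.rcosets_part_G[OF assms(3)] H.rcosets_part_G[OF assms(4)]
        \<open>finite (carrier G)\<close> \<open>finite (carrier H)\<close> by (metis Union_upper finite_subset)+
    moreover have "card C = card (\<theta> C)"
      using G.card_rcosets_equal[OF C] H.card_rcosets_equal[OF \<theta>C] card_eq assms(3,4)
      by (simp add: subgroup.subset)
    ultimately show ?thesis
      by (simp add: eqpoll_iff_card)
  qed
  then obtain f where f: "bij_betw f (carrier G) (carrier H)"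
    and f_in: "\<And>C x. C \<in> rcosets\<^bsub>G\<^esub> N \<Longrightarrow> x \<in> C \<Longrightarrow> f x \<in> \<theta> C"
    using partition_bij_lift[OF \<theta> G.rcosets_part_G H.rcosets_part_G G.rcos_disjoint H.rcos_disjoint]
      assms(3,4) by metis
  have "\<theta> (N #>\<^bsub>G\<^esub> g) = M #>\<^bsub>H\<^esub> f g" if g: "g \<in> carrier G" for g
  proof -
    have C: "N #>\<^bsub>G\<^esub> g \<in> rcosets\<^bsub>G\<^esub> N"
      using G.rcosetsI assms(3) g subgroup.subset by blast
    then obtain h where h: "h \<in> carrier H" "\<theta> (N #>\<^bsub>G\<^esub> g) = M #>\<^bsub>H\<^esub> h"
      using bij_betw_apply[OF \<theta> C] by (auto simp: RCOSETS_def)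
    moreover have "f g \<in> M #>\<^bsub>H\<^esub> h"
      using f_in[OF C] G.rcos_self[OF g assms(3)] h(2) by simp
    ultimately show ?thesis
      using H.repr_independence assms(4) by simp
  qed
  with f that show ?thesis by blast
qed

definition commutation_preserving_bij ::
    "('a, 'b) monoid_scheme \<Rightarrow> ('c, 'd) monoid_scheme \<Rightarrow> ('a \<Rightarrow> 'c) \<Rightarrow> bool" where
  "commutation_preserving_bij G H f \<longleftrightarrow> bij_betw f (carrier G) (carrier H) \<and>
     (\<forall>a \<in> carrier G. \<forall>b \<in> carrier G.
        a \<otimes>\<^bsub>G\<^esub> b = b \<otimes>\<^bsub>G\<^esub> a \<longleftrightarrow> f a \<otimes>\<^bsub>H\<^esub> f b = f b \<otimes>\<^bsub>H\<^esub> f a)"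

lemma isoclinic_imp_commutation_preserving_bij:
  assumes "group G" "group H" "finite (carrier G)" "order G = order H" "isoclinic G H"
  obtains f where "commutation_preserving_bij G H f"
proof -
  obtain \<theta> \<phi> where \<theta>: "\<theta> \<in> iso (G Mod grp_center G) (H Mod grp_center H)"
    and \<phi>: "\<phi> \<in> iso (comm_subgrp G) (comm_subgrp H)"
    and compatible: "\<And>g1 g2 h1 h2. \<lbrakk>g1 \<in> carrier G; g2 \<in> carrier G; h1 \<in> carrier H; h2 \<in> carrier H;
        \<theta> (grp_center G #>\<^bsub>G\<^esub> g1) = grp_center H #>\<^bsub>H\<^esub> h1;
        \<theta> (grp_center G #>\<^bsub>G\<^esub> g2) = grp_center H #>\<^bsub>H\<^esub> h2\<rbrakk>
        \<Longrightarrow> \<phi> (grp_comm G g1 g2) = grp_comm H h1 h2"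
    using \<open>isoclinic G H\<close> unfolding isoclinic_def by blast
  have "bij_betw \<theta> (rcosets\<^bsub>G\<^esub> grp_center G) (rcosets\<^bsub>H\<^esub> grp_center H)"
    using \<theta> by (simp add: iso_def FactGroup_def)
  then obtain f where f: "bij_betw f (carrier G) (carrier H)"
    and cosets: "\<And>g. g \<in> carrier G \<Longrightarrow> \<theta> (grp_center G #>\<^bsub>G\<^esub> g) = grp_center H #>\<^bsub>H\<^esub> f g"
    using lift_rcosets_bij assms(1-4) group.subgroup_grp_center by metis
  have "a \<otimes>\<^bsub>G\<^esub> b = b \<otimes>\<^bsub>G\<^esub> a \<longleftrightarrow> f a \<otimes>\<^bsub>H\<^esub> f b = f b \<otimes>\<^bsub>H\<^esub> f a"
    if "a \<in> carrier G" "b \<in> carrier G" for a b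
    using commute_iff_by_commutator_iso[OF assms(1,2) \<phi>] compatible cosets f that
    by (meson bij_betwE)
  with f have "commutation_preserving_bij G H f"
    by (simp add: commutation_preserving_bij_def)
  then show ?thesis
    by (rule that)
qed

lemma (in group) group_action_restrictI:
  assumes closed: "\<And>g x. g \<in> carrier G \<Longrightarrow> x \<in> E \<Longrightarrow> act g x \<in> E"
    and one: "\<And>x. x \<in> E \<Longrightarrow> act \<one> x = x"
    and mult: "\<And>g h x. g \<in> carrier G \<Longrightarrow> h \<in> carrier G \<Longrightarrow> x \<in> E \<Longrightarrow>
                 act (g \<otimes> h) x = act g (act h x)"
  shows "group_action G E (\<lambda>g. restrict (act g) E)"
proof -
  have Bij: "restrict (act g) E \<in> Bij E" if g: "g \<in> carrier G" for g
  proof -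
    have "act (inv g) (act g x) = x" "act g (act (inv g) x) = x" if "x \<in> E" for x
      using mult[of "inv g" g x] mult[of g "inv g" x] one g that by simp_all
    then have "bij_betw (act g) E E"
      using closed g by (intro bij_betw_byWitness[where f' = "act (inv g)"]) auto
    then show ?thesis
      by (simp add: Bij_def)
  qed
  have "restrict (act (g \<otimes> h)) E = compose E (restrict (act g) E) (restrict (act h) E)"
    if "g \<in> carrier G" "h \<in> carrier G" for g h
    using that closed mult by (auto simp: compose_def fun_eq_iff)
  then have "(\<lambda>g. restrict (act g) E) \<in> hom G (BijGroup E)"
    using Bij by (auto simp: hom_def BijGroup_def)
  then show ?thesis
    by (simp add: group_action_def group_hom_def group_hom_axioms_def group_BijGroup is_group)
qed

lemma tuples_in_carrier: "x \<in> tuples G n \<Longrightarrow> i < n \<Longrightarrow> x i \<in> carrier G"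
  by (auto simp: tuples_def)

lemma (in group) sim_conj_closed:
  "g \<in> carrier G \<Longrightarrow> x \<in> tuples G n \<Longrightarrow> sim_conj G n g x \<in> tuples G n"
  by (auto simp: sim_conj_def tuples_def)

lemma (in group) sim_conj_one:
  "x \<in> tuples G n \<Longrightarrow> sim_conj G n \<one> x = x"
  by (auto simp: sim_conj_def fun_eq_iff tuples_in_carrier tuples_def PiE_def extensional_def)

lemma (in group) sim_conj_mult:
  assumes "g \<in> carrier G" "h \<in> carrier G" "x \<in> tuples G n"
  shows "sim_conj G n (g \<otimes> h) x = sim_conj G n g (sim_conj G n h x)"
  using assms by (auto simp: sim_conj_def fun_eq_iff tuples_in_carrier inv_mult_group m_assoc)

lemma (in group) sim_conj_eq_self_iff:
  assumes "g \<in> carrier G" "x \<in> tuples G n"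
  shows "sim_conj G n g x = x \<longleftrightarrow> (\<forall>i<n. g \<otimes> x i = x i \<otimes> g)"
proof -
  have "sim_conj G n g x = x \<longleftrightarrow> (\<forall>i<n. g \<otimes> x i \<otimes> inv g = x i)"
    using assms(2) by (auto simp: sim_conj_def tuples_def fun_eq_iff PiE_def extensional_def)
  also have "\<dots> \<longleftrightarrow> (\<forall>i<n. g \<otimes> x i = x i \<otimes> g)"
    using assms by (simp add: inv_solve_right' tuples_in_carrier)
  finally show ?thesis .
qed

lemma (in group) sim_conj_comm_tuples_closed:
  assumes "g \<in> carrier G" "x \<in> comm_tuples G n"
  shows "sim_conj G n g x \<in> comm_tuples G n"
proof -
  have x: "x \<in> tuples G n" "\<And>i j. i < n \<Longrightarrow> j < n \<Longrightarrow> x i \<otimes> x j = x j \<otimes> x i"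
    using assms(2) by (auto simp: comm_tuples_def)
  have conj_mult: "(g \<otimes> a \<otimes> inv g) \<otimes> (g \<otimes> b \<otimes> inv g) = g \<otimes> (a \<otimes> b) \<otimes> inv g"
    if "a \<in> carrier G" "b \<in> carrier G" for a b
    using assms(1) that by (simp add: m_assoc) (simp add: m_assoc[symmetric])
  show ?thesis
    using x conj_mult sim_conj_closed[OF assms(1) x(1)]
    by (auto simp: comm_tuples_def sim_conj_def tuples_in_carrier)
qed

lemma (in group) num_orbits_mult_order:
  assumes "finite (carrier G)" "S \<subseteq> tuples G n"
    and stable: "\<And>g x. g \<in> carrier G \<Longrightarrow> x \<in> S \<Longrightarrow> sim_conj G n g x \<in> S"
  shows "num_orbits G n S * order G = (\<Sum>g \<in> carrier G. card {x \<in> S. \<forall>i<n. g \<otimes> x i = x i \<otimes> g})"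
proof -
  let ?\<phi> = "\<lambda>g. restrict (sim_conj G n g) S"
  interpret group_action G S ?\<phi>
    using assms sim_conj_one sim_conj_mult by (intro group_action_restrictI) auto
  have "finite (tuples G n)"
    using assms(1) by (simp add: tuples_def finite_PiE)
  then have "finite S"
    using assms(2) by (rule finite_subset[rotated])
  have "orbits G S ?\<phi> = conj_orbit G n ` S"
    by (auto simp: orbits_def orbit_def conj_orbit_def)
  moreover have "invariants S ?\<phi> g = {x \<in> S. \<forall>i<n. g \<otimes> x i = x i \<otimes> g}" if "g \<in> carrier G" for g
    using that assms(2) sim_conj_eq_self_iff by (auto simp: invariants_def)
  ultimately show ?thesis
    using burnside[OF assms(1) \<open>finite S\<close>] by (simp add: num_orbits_def)
qed

lemma bij_betw_PiE_compose:
  assumes "bij_betw f A B"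
  shows "bij_betw (\<lambda>x. \<lambda>i\<in>I. f (x i)) (I \<rightarrow>\<^sub>E A) (I \<rightarrow>\<^sub>E B)"
proof (rule bij_betw_byWitness[where f' = "\<lambda>y. \<lambda>i\<in>I. inv_into A f (y i)"])
  have inv: "\<And>a. a \<in> A \<Longrightarrow> inv_into A f (f a) = a \<and> f a \<in> B"
    "\<And>b. b \<in> B \<Longrightarrow> f (inv_into A f b) = b \<and> inv_into A f b \<in> A"
    using assms by (auto simp: bij_betw_def inv_into_into)
  then show
    "\<forall>x\<in>I \<rightarrow>\<^sub>E A. (\<lambda>i\<in>I. inv_into A f ((\<lambda>i\<in>I. f (x i)) i)) = x"
    "\<forall>y\<in>I \<rightarrow>\<^sub>E B. (\<lambda>i\<in>I. f ((\<lambda>i\<in>I. inv_into A f (y i)) i)) = y"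
    "(\<lambda>x. \<lambda>i\<in>I. f (x i)) ` (I \<rightarrow>\<^sub>E A) \<subseteq> I \<rightarrow>\<^sub>E B"
    "(\<lambda>y. \<lambda>i\<in>I. inv_into A f (y i)) ` (I \<rightarrow>\<^sub>E B) \<subseteq> I \<rightarrow>\<^sub>E A"
    by (auto simp: PiE_iff fun_eq_iff extensional_def)
qed

lemma commutation_preserving_bij_num_orbits_eq:
  assumes "group G" "group H" "finite (carrier G)" and f: "commutation_preserving_bij G H f"
    and S: "S \<subseteq> tuples G n" "\<And>g x. g \<in> carrier G \<Longrightarrow> x \<in> S \<Longrightarrow> sim_conj G n g x \<in> S"
    and T: "T \<subseteq> tuples H n" "\<And>h y. h \<in> carrier H \<Longrightarrow> y \<in> T \<Longrightarrow> sim_conj H n h y \<in> T"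
    and F: "bij_betw (\<lambda>x. \<lambda>i\<in>{0..<n}. f (x i)) S T"
  shows "num_orbits G n S = num_orbits H n T"
proof -
  interpret G: group G by fact
  interpret H: group H by fact
  have bij: "bij_betw f (carrier G) (carrier H)"
    and comm: "\<And>a b. a \<in> carrier G \<Longrightarrow> b \<in> carrier G \<Longrightarrow>
                 a \<otimes>\<^bsub>G\<^esub> b = b \<otimes>\<^bsub>G\<^esub> a \<longleftrightarrow> f a \<otimes>\<^bsub>H\<^esub> f b = f b \<otimes>\<^bsub>H\<^esub> f a"
    using f by (auto simp: commutation_preserving_bij_def)
  have order: "order G = order H"
    using bij by (simp add: order_def bij_betw_same_card)
  have "finite (carrier H)"
    using bij \<open>finite (carrier G)\<close> bij_betw_finite by blast
  have "card {x \<in> S. \<forall>i<n. g \<otimes>\<^bsub>G\<^esub> x i = x i \<otimes>\<^bsub>G\<^esub> g}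
      = card {y \<in> T. \<forall>i<n. f g \<otimes>\<^bsub>H\<^esub> y i = y i \<otimes>\<^bsub>H\<^esub> f g}" if g: "g \<in> carrier G" for g
  proof (rule bij_betw_same_card, rule bij_betw_Collect[OF F])
    fix x assume "x \<in> S"
    then have "x \<in> tuples G n"
      using S(1) by blast
    then show "(\<forall>i<n. f g \<otimes>\<^bsub>H\<^esub> (\<lambda>i\<in>{0..<n}. f (x i)) i = (\<lambda>i\<in>{0..<n}. f (x i)) i \<otimes>\<^bsub>H\<^esub> f g)
        \<longleftrightarrow> (\<forall>i<n. g \<otimes>\<^bsub>G\<^esub> x i = x i \<otimes>\<^bsub>G\<^esub> g)"
      by (simp add: comm[OF g] tuples_in_carrier)
  qed
  then have "num_orbits G n S * order G
      = (\<Sum>g \<in> carrier G. card {y \<in> T. \<forall>i<n. f g \<otimes>\<^bsub>H\<^esub> y i = y i \<otimes>\<^bsub>H\<^esub> f g})"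
    using G.num_orbits_mult_order[OF \<open>finite (carrier G)\<close> S] by simp
  also have "\<dots> = (\<Sum>h \<in> carrier H. card {y \<in> T. \<forall>i<n. h \<otimes>\<^bsub>H\<^esub> y i = y i \<otimes>\<^bsub>H\<^esub> h})"
    by (rule sum.reindex_bij_betw[OF bij])
  also have "\<dots> = num_orbits H n T * order G"
    using H.num_orbits_mult_order[OF \<open>finite (carrier H)\<close> T] order by simp
  finally show ?thesis
    using G.order_gt_0_iff_finite \<open>finite (carrier G)\<close> by simp
qed

lemma commutation_preserving_bij_alpha_beta_eq:
  assumes "group G" "group H" "finite (carrier G)" and f: "commutation_preserving_bij G H f"
  shows "alpha G n = alpha H n" and "beta G n = beta H n"
proof -
  let ?F = "\<lambda>x. \<lambda>i\<in>{0..<n}. f (x i)"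
  have bij: "bij_betw f (carrier G) (carrier H)"
    and comm: "\<And>a b. a \<in> carrier G \<Longrightarrow> b \<in> carrier G \<Longrightarrow>
                 a \<otimes>\<^bsub>G\<^esub> b = b \<otimes>\<^bsub>G\<^esub> a \<longleftrightarrow> f a \<otimes>\<^bsub>H\<^esub> f b = f b \<otimes>\<^bsub>H\<^esub> f a"
    using f by (auto simp: commutation_preserving_bij_def)
  have tuples: "bij_betw ?F (tuples G n) (tuples H n)"
    unfolding tuples_def using bij by (rule bij_betw_PiE_compose)
  show "alpha G n = alpha H n"
    unfolding alpha_def
    by (rule commutation_preserving_bij_num_orbits_eq[OF assms subset_refl _ subset_refl _ tuples])
      (simp_all add: group.sim_conj_closed assms(1,2))
  have "bij_betw ?F (comm_tuples G n) (comm_tuples H n)"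
    unfolding comm_tuples_def
    by (rule bij_betw_Collect[OF tuples]) (simp add: comm tuples_in_carrier)
  moreover have "comm_tuples G n \<subseteq> tuples G n" "comm_tuples H n \<subseteq> tuples H n"
    by (auto simp: comm_tuples_def)
  ultimately show "beta G n = beta H n"
    unfolding beta_def
    by (intro commutation_preserving_bij_num_orbits_eq[OF assms])
      (simp_all add: group.sim_conj_comm_tuples_closed assms(1,2))
qed

theorem corollary4p4:
  fixes G :: "('a, 'b) monoid_scheme" and H :: "('c, 'd) monoid_scheme"
  assumes "group G" and "group H"
    and "finite (carrier G)" and "finite (carrier H)"
    and "isoclinic G H"
    and "card (carrier G) = card (carrier H)"
  shows "A_series G = A_series H \<and> B_series G = B_series H"
proof -
  obtain f where "commutation_preserving_bij G H f"
    using isoclinic_imp_commutation_preserving_bij assms by (metis order_def)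
  then have "alpha G n = alpha H n" "beta G n = beta H n" for n
    using commutation_preserving_bij_alpha_beta_eq assms(1-3) by blast+
  then show ?thesis
    by (simp add: A_series_def B_series_def)
qed

end
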